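(* Let $\phi:\mathbb{R}^{K+J}\times[K+J]\to\mathbb{R}_{\ge 0}$ be such that $\theta\mapsto\phi(\theta,i)$ is continuous on $\mathbb{R}^{K+J}$ for every $i\in[K+J]$, and suppose $\phi$ is symmetric with respect to its last $J$ inputs. Then for every $y\in[K]$ and every $m\in[K]^J$, the map $\theta\mapsto\widetilde{\ell}_\phi(\theta,y,m)$ is continuous on $\mathbb{R}^{K+J}$.
   Context: Fix integers $K\ge 2$ (number of classes) and $J\ge 1$ (number of experts); $[n]=\{1,\dots,n\}$. For a finite index set $I$ and reals $(a_i)_{i\in I}$, $\operatorname{argmax}_{i\in I}a_i$ denotes a single maximizer chosen by a fixed deterministic tie-breaking rule. For $y\in[K]$ and $m=(m_1,\dots,m_J)\in[K]^J$, let $[m=y]=\{j\in[J]: m_j=y\}$. Given a multiclass loss $\phi:\mathbb{R}^{K+J}\times[K+J]\to\mathbb{R}_{\ge0}$, the PiCCE loss is $$\widetilde{\ell}_\phi(\theta,y,m)=\phi(\theta,y)+\phi\Big(\theta,\ \operatorname{argmax}_{j\in[m=y]}\theta_{j+K}+K\Big),\quad \theta\in\mathbb{R}^{K+J},$$ where the second term is defined to be $0$ when $[m=y]=\emptyset$. Write $\boldsymbol{\phi}(\theta)=(\phi(\theta,1),\dots,\phi(\theta,K+J))^\top$. The loss $\phi$ is called symmetric with respect to its last $J$ inputs if $P\boldsymbol{\phi}(\theta)=\boldsymbol{\phi}(P\theta)$ for all $\theta\in\mathbb{R}^{K+J}$ and all $(K+J)\times(K+J)$ permutation matrices $P$ with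 $P_{i,i}=1$ for all $i\in[K]$ (i.e. permutations fixing the first $K$ coordinates). *)

theory Defs
  imports "HOL-Analysis.Analysis"
begin

text \<open>Index set [K+J] is represented by the finite type 'k + 'j:
  Inl k are the K class coordinates, Inr j the J expert coordinates.
  Thus R^(K+J) is real ^ ('k::finite + 'j::finite), with K = CARD('k), J = CARD('j).\<close>

definition argmax_rule :: "('j::finite set \<Rightarrow> ('j \<Rightarrow> real) \<Rightarrow> 'j) \<Rightarrow> bool" where
  "argmax_rule sel \<longleftrightarrow>
     (\<forall>S f. S \<noteq> {} \<longrightarrow> sel S f \<in> S \<and> (\<forall>s\<in>S. f s \<le> f (sel S f)))"

text \<open>Symmetry w.r.t. the last J inputs: for every permutation matrix P fixing the
  first K coordinates, (P phi(theta))_a = phi(theta, pi a) and (P theta)_a = theta_(pi a).\<close>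
definition symmetric_last ::
  "(real ^ ('k::finite + 'j::finite) \<Rightarrow> ('k + 'j) \<Rightarrow> real) \<Rightarrow> bool" where
  "symmetric_last \<phi> \<longleftrightarrow>
     (\<forall>\<pi> \<theta> a. bij \<pi> \<and> (\<forall>k. \<pi> (Inl k) = Inl k) \<longrightarrow>
        \<phi> (\<chi> b. \<theta> $ \<pi> b) a = \<phi> \<theta> (\<pi> a))"

definition picce ::
  "(real ^ ('k::finite + 'j::finite) \<Rightarrow> ('k + 'j) \<Rightarrow> real) \<Rightarrow> ('j set \<Rightarrow> ('j \<Rightarrow> real) \<Rightarrow> 'j) \<Rightarrow>
   real ^ ('k::finite + 'j::finite) \<Rightarrow> 'k \<Rightarrow> ('j \<Rightarrow> 'k) \<Rightarrow> real" where
  "picce \<phi> sel \<theta> y m =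
     \<phi> \<theta> (Inl y) +
     (if {j. m j = y} = {} then 0
      else \<phi> \<theta> (Inr (sel {j. m j = y} (\<lambda>j. \<theta> $ Inr j))))"

end

theory Submission
  imports Defs
begin

text \<open>Near any point t the selected expert is one of the experts maximising the score t on [m = y],
  because every strict inequality at t persists nearby. All these maximisers carry the same
  score, and by symmetry of \<phi> under the transposition of two expert coordinates with equal
  scores they also carry the same loss \<phi>(t, \<cdot>). Hence the discontinuous choice of index is
  invisible in the value of the second summand, which is therefore continuous.\<close>

lemma argmax_rule_in:
  "argmax_rule sel \<Longrightarrow> S \<noteq> {} \<Longrightarrow> sel S f \<in> S"
  unfolding argmax_rule_def by blast

lemma argmax_rule_ge:
  "argmax_rule sel \<Longrightarrow> S \<noteq> {} \<Longrightarrow> s \<in> S \<Longrightarrow> f s \<le> f (sel S f)"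
  unfolding argmax_rule_def by blast

lemma symmetric_last_eq_if_scores_eq:
  fixes \<phi> :: "real ^ ('k::finite + 'j::finite) \<Rightarrow> ('k + 'j) \<Rightarrow> real"
  assumes "symmetric_last \<phi>" and "\<theta> $ Inr i = \<theta> $ Inr j"
  shows "\<phi> \<theta> (Inr i) = \<phi> \<theta> (Inr j)"
proof -
  let ?\<pi> = "Transposition.transpose (Inr i) (Inr j :: 'k + 'j)"
  have "(\<chi> b. \<theta> $ ?\<pi> b) = \<theta>"
    using assms(2) by (auto simp: vec_eq_iff Transposition.transpose_def)
  moreover have "\<phi> (\<chi> b. \<theta> $ ?\<pi> b) (Inr i) = \<phi> \<theta> (?\<pi> (Inr i))"
    using assms(1) unfolding symmetric_last_def by (simp add: transpose_def)
  ultimately show ?thesis by simp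
qed

lemma eventually_argmax_rule_maximises_limit:
  fixes v :: "'a \<Rightarrow> 'j::finite \<Rightarrow> real"
  assumes sel: "argmax_rule sel" and "S \<noteq> {}"
    and lim: "\<And>j. ((\<lambda>x. v x j) \<longlongrightarrow> v\<^sub>0 j) F"
  shows "\<forall>\<^sub>F x in F. \<forall>s\<in>S. v\<^sub>0 s \<le> v\<^sub>0 (sel S (v x))"
proof -
  define j\<^sub>0 where "j\<^sub>0 = sel S v\<^sub>0"
  have j\<^sub>0: "j\<^sub>0 \<in> S" "\<forall>s\<in>S. v\<^sub>0 s \<le> v\<^sub>0 j\<^sub>0"
    using argmax_rule_in[OF sel \<open>S \<noteq> {}\<close>] argmax_rule_ge[OF sel \<open>S \<noteq> {}\<close>]
    unfolding j\<^sub>0_def by auto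
  have "\<forall>\<^sub>F x in F. \<forall>j\<in>{j\<in>S. v\<^sub>0 j < v\<^sub>0 j\<^sub>0}. v x j < v x j\<^sub>0"
  proof (rule eventually_ball_finite)
    show "\<forall>j\<in>{j\<in>S. v\<^sub>0 j < v\<^sub>0 j\<^sub>0}. \<forall>\<^sub>F x in F. v x j < v x j\<^sub>0"
    proof
      fix j assume "j \<in> {j\<in>S. v\<^sub>0 j < v\<^sub>0 j\<^sub>0}"
      then have "v\<^sub>0 j\<^sub>0 - v\<^sub>0 j > 0" by simp
      from order_tendstoD(1)[OF tendsto_diff[OF lim lim] this]
      show "\<forall>\<^sub>F x in F. v x j < v x j\<^sub>0" by eventually_elim simp
    qed
  qed simp
  then show ?thesis
  proof eventually_elim
    case (elim x)
    have "sel S (v x) \<in> S" "v x j\<^sub>0 \<le> v x (sel S (v x))"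
      using argmax_rule_in[OF sel \<open>S \<noteq> {}\<close>] argmax_rule_ge[OF sel \<open>S \<noteq> {}\<close> j\<^sub>0(1)] by auto
    with elim j\<^sub>0(2) show ?case by force
  qed
qed

lemma tendsto_argmax_rule_select:
  fixes v :: "'a \<Rightarrow> 'j::finite \<Rightarrow> real" and g :: "'a \<Rightarrow> 'j \<Rightarrow> 'b::metric_space"
  assumes sel: "argmax_rule sel" and "S \<noteq> {}"
    and lim_v: "\<And>j. ((\<lambda>x. v x j) \<longlongrightarrow> v\<^sub>0 j) F"
    and lim_g: "\<And>j. ((\<lambda>x. g x j) \<longlongrightarrow> g\<^sub>0 j) F"
    and ties: "\<And>i j. i \<in> S \<Longrightarrow> j \<in> S \<Longrightarrow> v\<^sub>0 i = v\<^sub>0 j \<Longrightarrow> g\<^sub>0 i = g\<^sub>0 j"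
  shows "((\<lambda>x. g x (sel S (v x))) \<longlongrightarrow> g\<^sub>0 (sel S v\<^sub>0)) F"
proof (rule tendstoI)
  fix e :: real assume "e > 0"
  have close: "\<forall>\<^sub>F x in F. \<forall>j. dist (g x j) (g\<^sub>0 j) < e"
    using lim_g \<open>e > 0\<close> by (simp add: tendstoD eventually_all_finite)
  have "v\<^sub>0 (sel S v\<^sub>0) = v\<^sub>0 s" if "s \<in> S" "\<forall>t\<in>S. v\<^sub>0 t \<le> v\<^sub>0 s" for s
    using that argmax_rule_in[OF sel \<open>S \<noteq> {}\<close>] argmax_rule_ge[OF sel \<open>S \<noteq> {}\<close>]
    by (meson order_antisym)
  then have same_limit: "g\<^sub>0 s = g\<^sub>0 (sel S v\<^sub>0)" if "s \<in> S" "\<forall>t\<in>S. v\<^sub>0 t \<le> v\<^sub>0 s" for s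
    using that ties argmax_rule_in[OF sel \<open>S \<noteq> {}\<close>] by metis
  from close eventually_argmax_rule_maximises_limit[where v = v, OF sel \<open>S \<noteq> {}\<close> lim_v]
  show "\<forall>\<^sub>F x in F. dist (g x (sel S (v x))) (g\<^sub>0 (sel S v\<^sub>0)) < e"
  proof eventually_elim
    case (elim x)
    then show ?case
      using same_limit argmax_rule_in[OF sel \<open>S \<noteq> {}\<close>] by metis
  qed
qed

theorem theorem1:
  fixes \<phi> :: "real ^ ('k::finite + 'j::finite) \<Rightarrow> ('k + 'j) \<Rightarrow> real"
    and sel :: "'j set \<Rightarrow> ('j \<Rightarrow> real) \<Rightarrow> 'j"
    and y :: 'k and m :: "'j \<Rightarrow> 'k"
  assumes "CARD('k) \<ge> 2"
    and "argmax_rule sel"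
    and "\<And>\<theta> i. \<phi> \<theta> i \<ge> 0"
    and "\<And>i. continuous_on UNIV (\<lambda>\<theta>. \<phi> \<theta> i)"
    and "symmetric_last \<phi>"
  shows "continuous_on UNIV (\<lambda>\<theta>. picce \<phi> sel \<theta> y m)"
proof -
  have cont: "isCont (\<lambda>\<theta>. \<phi> \<theta> i) \<theta>\<^sub>0" for i \<theta>\<^sub>0
    using assms(4) by (simp add: continuous_on_eq_continuous_at)
  have expert_term: "isCont (\<lambda>\<theta>. \<phi> \<theta> (Inr (sel S (\<lambda>j. \<theta> $ Inr j)))) \<theta>\<^sub>0"
    if "S \<noteq> {}" for S \<theta>\<^sub>0
    unfolding isCont_def
  proof (rule tendsto_argmax_rule_select[OF assms(2) that])
    show "((\<lambda>\<theta>. \<theta> $ Inr j) \<longlongrightarrow> \<theta>\<^sub>0 $ Inr j) (at \<theta>\<^sub>0)" for j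
      by (intro tendsto_intros)
    show "((\<lambda>\<theta>. \<phi> \<theta> (Inr j)) \<longlongrightarrow> \<phi> \<theta>\<^sub>0 (Inr j)) (at \<theta>\<^sub>0)" for j
      using cont by (simp add: isCont_def)
  qed (use symmetric_last_eq_if_scores_eq[OF assms(5)] in blast)
  show ?thesis
  proof (cases "{j. m j = y} = {}")
    case True
    then show ?thesis
      using assms(4) by (simp add: picce_def)
  next
    case False
    have "isCont (\<lambda>\<theta>. picce \<phi> sel \<theta> y m) \<theta>\<^sub>0" for \<theta>\<^sub>0
      unfolding picce_def using cont expert_term[OF False]
      by (simp add: False continuous_add del: Collect_empty_eq)
    then show ?thesis
      by (simp add: continuous_on_eq_continuous_at)
  qed
qed

end
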